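(* Let $R$ be an associative ring and let $X$ be a finite set of unknowns. Consider a finite system of equations over $R$, each of the form $\sum_i\prod_j c_{ij}x_{ij}^{k_{ij}}=0$ (finitely many summands, called monomials, each a finite product) with $c_{ij}\in R$, $x_{ij}\in X$, $k_{ij}\in\mathbb{Z}$. If $$\sum_{\text{equations}}\big((\text{number of monomials in the equation})-1\big)<|X|,$$ then the system is generalised homogeneous.
   Context: A system of such equations is generalised homogeneous if there is a nonzero map $\deg: X\to\mathbb{Z}$ such that, for each equation, the value $\sum_j k_{ij}\deg(x_{ij})$ (the degree of the $i$-th monomial) does not depend on $i$ (the common value may differ from equation to equation, but the same map $\deg$ is used for all equations). *)

theory Defs
  imports Main
begin

text \<open>A monomial c_1 x_1^{k_1} ... c_m x_m^{k_m} over a ring 'r in unknowns of type 'x is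
  represented by the list of its factors (c_j, x_j, k_j).  An equation
  sum_i monomial_i = 0 is represented by the list of its monomials, and a finite
  system by the list of its equations.\<close>

type_synonym ('r, 'x) monomial = "('r \<times> 'x \<times> int) list"
type_synonym ('r, 'x) equation = "('r, 'x) monomial list"

definition monomial_vars :: "('r, 'x) monomial \<Rightarrow> 'x set" where
  "monomial_vars m = (\<lambda>(c, x, k). x) ` set m"

definition monomial_degree :: "('x \<Rightarrow> int) \<Rightarrow> ('r, 'x) monomial \<Rightarrow> int" where
  "monomial_degree deg m = (\<Sum>(c, x, k) \<leftarrow> m. k * deg x)"

definition gen_homogeneous :: "'x set \<Rightarrow> ('r, 'x) equation list \<Rightarrow> bool" where
  "gen_homogeneous X sys \<longleftrightarrow>
     (\<exists>deg :: 'x \<Rightarrow> int. (\<exists>x\<in>X. deg x \<noteq> 0) \<and>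
        (\<forall>e \<in> set sys. \<forall>m1 \<in> set e. \<forall>m2 \<in> set e.
            monomial_degree deg m1 = monomial_degree deg m2))"

end

theory Submission
  imports Defs
begin

text \<open>The degree of a monomial is an integer linear form in the values of the degree map,
  the coefficient of an unknown y being the total exponent of y in the monomial. All
  monomials of an equation with n monomials have equal degree iff the n - 1 differences
  of these forms to the first monomial vanish. Hence it suffices that a homogeneous integer
  linear system with fewer equations than unknowns has a nontrivial integer solution, which
  follows by fraction-free elimination of one unknown at a time.\<close>

lemma eliminate_unknown:
  fixes f :: "'x \<Rightarrow> int"
  assumes "finite X" "x0 \<in> X" "f x0 \<noteq> 0"
    and "\<forall>g\<in>set gs. (\<Sum>y\<in>X - {x0}. (f x0 * g y - g x0 * f y) * d' y) = 0"
    and "\<exists>x\<in>X - {x0}. d' x \<noteq> 0"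
  shows "\<exists>d. (\<exists>x\<in>X. d x \<noteq> 0) \<and> (\<forall>g\<in>set (f # gs). (\<Sum>y\<in>X. g y * d y) = 0)"
proof -
  define S where "S = (\<Sum>y\<in>X - {x0}. f y * d' y)"
  define d where "d y = (if y = x0 then - S else f x0 * d' y)" for y
  have sum_X: "(\<Sum>y\<in>X. g y * d y) = - g x0 * S + f x0 * (\<Sum>y\<in>X - {x0}. g y * d' y)" for g
  proof -
    have "(\<Sum>y\<in>X. g y * d y) = g x0 * d x0 + (\<Sum>y\<in>X - {x0}. g y * d y)"
      using assms(1,2) by (simp add: sum.remove)
    also have "(\<Sum>y\<in>X - {x0}. g y * d y) = f x0 * (\<Sum>y\<in>X - {x0}. g y * d' y)"
      by (auto simp: d_def sum_distrib_left intro!: sum.cong)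
    finally show ?thesis by (simp add: d_def)
  qed
  have "(\<Sum>y\<in>X. g y * d y) = 0" if "g \<in> set gs" for g
  proof -
    have "(\<Sum>y\<in>X - {x0}. (f x0 * g y - g x0 * f y) * d' y) = 0"
      using assms(4) that by blast
    then have "f x0 * (\<Sum>y\<in>X - {x0}. g y * d' y) - g x0 * S = 0"
      by (simp add: S_def sum_distrib_left algebra_simps sum_subtractf)
    then show ?thesis by (simp add: sum_X)
  qed
  moreover have "(\<Sum>y\<in>X. f y * d y) = 0"
    by (simp add: sum_X S_def)
  moreover have "\<exists>x\<in>X. d x \<noteq> 0"
    using assms(3,5) by (auto simp: d_def)
  ultimately show ?thesis by auto
qed

lemma int_linear_system_nontrivial_solution:
  fixes fs :: "('x \<Rightarrow> int) list"
  assumes "finite X" "length fs < card X"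
  shows "\<exists>d. (\<exists>x\<in>X. d x \<noteq> 0) \<and> (\<forall>g\<in>set fs. (\<Sum>y\<in>X. g y * d y) = 0)"
  using assms
proof (induction "length fs" arbitrary: fs X)
  case 0
  then obtain x where "x \<in> X" by fastforce
  with 0 show ?case by (intro exI[of _ "\<lambda>_. 1"]) auto
next
  case (Suc n)
  then obtain f gs where fs: "fs = f # gs" and n: "n = length gs"
    by (cases fs) auto
  show ?case
  proof (cases "\<forall>y\<in>X. f y = 0")
    case True
    have "length gs < card X" using Suc.prems fs by simp
    with Suc.hyps(1)[OF n] Suc.prems(1) obtain d where
      "\<exists>x\<in>X. d x \<noteq> 0" "\<forall>g\<in>set gs. (\<Sum>y\<in>X. g y * d y) = 0"
      by blast
    with True fs show ?thesis by auto
  next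
    case False
    then obtain x0 where x0: "x0 \<in> X" "f x0 \<noteq> 0" by auto
    let ?gs' = "map (\<lambda>g y. f x0 * g y - g x0 * f y) gs"
    have "length ?gs' < card (X - {x0})"
      using Suc.prems fs x0(1) by auto
    with Suc.hyps(1)[of ?gs' "X - {x0}"] Suc.prems(1) n obtain d' where
      "\<exists>x\<in>X - {x0}. d' x \<noteq> 0"
      "\<forall>g\<in>set gs. (\<Sum>y\<in>X - {x0}. (f x0 * g y - g x0 * f y) * d' y) = 0"
      by auto
    from eliminate_unknown[OF Suc.prems(1) x0 this(2,1)] show ?thesis
      unfolding fs .
  qed
qed

definition exponent :: "('r, 'x) monomial \<Rightarrow> 'x \<Rightarrow> int" where
  "exponent m y = (\<Sum>(c, x, k) \<leftarrow> m. if x = y then k else 0)"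

lemma monomial_degree_eq_sum_exponent:
  assumes "finite X" "monomial_vars m \<subseteq> X"
  shows "monomial_degree deg m = (\<Sum>y\<in>X. exponent m y * deg y)"
  using assms(2)
proof (induction m)
  case Nil
  then show ?case by (simp add: monomial_degree_def exponent_def)
next
  case (Cons a m)
  obtain c x k where a: "a = (c, x, k)" by (cases a) auto
  have "x \<in> X" using Cons.prems a by (auto simp: monomial_vars_def)
  have IH: "monomial_degree deg m = (\<Sum>y\<in>X. exponent m y * deg y)"
    using Cons by (auto simp: monomial_vars_def)
  have "(\<Sum>y\<in>X. exponent (a # m) y * deg y)
      = (\<Sum>y\<in>X. if x = y then k * deg y else 0) + (\<Sum>y\<in>X. exponent m y * deg y)"
    by (simp add: a exponent_def sum.distrib[symmetric] algebra_simps, rule sum.cong, auto)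
  also have "(\<Sum>y\<in>X. if x = y then k * deg y else 0) = k * deg x"
    using assms(1) \<open>x \<in> X\<close> by (simp add: sum.delta)
  finally show ?case using IH by (simp add: a monomial_degree_def)
qed

definition degree_differences :: "('r, 'x) equation \<Rightarrow> ('x \<Rightarrow> int) list" where
  "degree_differences e = map (\<lambda>m y. exponent m y - exponent (hd e) y) (tl e)"

lemma length_degree_differences: "length (degree_differences e) = length e - 1"
  by (simp add: degree_differences_def)

lemma monomial_degree_eq_hd_degree:
  assumes "finite X" "\<forall>m\<in>set e. monomial_vars m \<subseteq> X"
    and "\<forall>g\<in>set (degree_differences e). (\<Sum>y\<in>X. g y * deg y) = 0"
    and "m \<in> set e"
  shows "monomial_degree deg m = monomial_degree deg (hd e)"
proof (cases "m \<in> set (tl e)")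
  case True
  have "e \<noteq> []" using assms(4) by auto
  then have "monomial_vars m \<subseteq> X" "monomial_vars (hd e) \<subseteq> X"
    using assms(2,4) by (simp_all add: hd_in_set)
  moreover have "(\<Sum>y\<in>X. (exponent m y - exponent (hd e) y) * deg y) = 0"
    using True assms(3) by (auto simp: degree_differences_def)
  ultimately show ?thesis
    by (simp add: monomial_degree_eq_sum_exponent[OF assms(1)] algebra_simps sum_subtractf)
next
  case False
  with assms(4) show ?thesis by (cases e) auto
qed

theorem mainTheorem8:
  fixes X :: "'x set" and sys :: "('r :: ring, 'x) equation list"
  assumes "finite X"
    and "\<forall>e \<in> set sys. \<forall>m \<in> set e. monomial_vars m \<subseteq> X"
    and "(\<Sum>e \<leftarrow> sys. length e - 1) < card X"
  shows "gen_homogeneous X sys"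
proof -
  define fs where "fs = concat (map degree_differences sys)"
  have "length fs = (\<Sum>e \<leftarrow> sys. length e - 1)"
    by (simp add: fs_def length_concat comp_def length_degree_differences)
  with int_linear_system_nontrivial_solution[OF assms(1), of fs] assms(3) obtain deg where
    "\<exists>x\<in>X. deg x \<noteq> 0" and solves: "\<forall>g\<in>set fs. (\<Sum>y\<in>X. g y * deg y) = 0"
    by auto
  moreover have "monomial_degree deg m = monomial_degree deg (hd e)"
    if "e \<in> set sys" "m \<in> set e" for e m
    using monomial_degree_eq_hd_degree[OF assms(1), of e deg m] assms(2) solves that
    by (simp add: fs_def)
  ultimately show ?thesis
    unfolding gen_homogeneous_def by metis
qed

end
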